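(* Let $\mathcal H_m$ denote the set of $2$-regular graphs on $m$ vertices containing no subgraph isomorphic to $K_{2,2}$ (i.e., disjoint unions of cycles, none of length $4$), and let $$\mathcal G_n = \{K_1 * (K_1 + H) : H \in \mathcal H_{n-2}\} \cup \{K_1 * (K_2 + H) : H \in \mathcal H_{n-3}\} \cup \{K_1 * (P_4 + H) : H \in \mathcal H_{n-5}\}.$$ Then every graph in $\mathcal G_n$ is $K_{2,3}$-saturated and has exactly $2n-3$ edges.
   Context: All graphs are finite and simple. $K_m$ is the complete graph and $P_m$ the path on $m$ vertices. For graphs $G,H$ on disjoint vertex sets, $G+H$ is their disjoint union, and the join $G*H$ is obtained from $G+H$ by adding all edges $xy$ with $x \in V(G)$, $y \in V(H)$. A graph $G$ is $K_{2,3}$-saturated if $G$ contains no subgraph isomorphic to $K_{2,3}$, but for every pair of nonadjacent vertices $u,v$, the graph $G+uv$ contains a subgraph isomorphic to $K_{2,3}$. *)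

theory Defs
  imports Main
begin

type_synonym 'a graph = "'a set \<times> 'a set set"

definition verts :: "'a graph \<Rightarrow> 'a set" where "verts G = fst G"
definition edges :: "'a graph \<Rightarrow> 'a set set" where "edges G = snd G"

definition wf_graph :: "'a graph \<Rightarrow> bool" where
  "wf_graph G \<longleftrightarrow> finite (verts G) \<and>
     (\<forall>e\<in>edges G. \<exists>u v. e = {u, v} \<and> u \<in> verts G \<and> v \<in> verts G \<and> u \<noteq> v)"

definition contains_subgraph :: "'b graph \<Rightarrow> 'a graph \<Rightarrow> bool" where
  "contains_subgraph H G \<longleftrightarrow> (\<exists>f. inj_on f (verts H) \<and> f ` verts H \<subseteq> verts G \<and>
      (\<forall>e\<in>edges H. f ` e \<in> edges G))"

definition complete_bipartite :: "nat \<Rightarrow> nat \<Rightarrow> nat graph" where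
  "complete_bipartite s t = ({0..<s+t}, {{i, j} | i j. i < s \<and> s \<le> j \<and> j < s + t})"

definition add_edge :: "'a graph \<Rightarrow> 'a \<Rightarrow> 'a \<Rightarrow> 'a graph" where
  "add_edge G u v = (verts G, insert {u, v} (edges G))"

definition K23_saturated :: "'a graph \<Rightarrow> bool" where
  "K23_saturated G \<longleftrightarrow> wf_graph G \<and> \<not> contains_subgraph (complete_bipartite 2 3) G \<and>
     (\<forall>u\<in>verts G. \<forall>v\<in>verts G. u \<noteq> v \<and> {u, v} \<notin> edges G \<longrightarrow>
        contains_subgraph (complete_bipartite 2 3) (add_edge G u v))"

definition degree :: "'a graph \<Rightarrow> 'a \<Rightarrow> nat" where
  "degree G v = card {u. {u, v} \<in> edges G}"

definition two_regular :: "'a graph \<Rightarrow> bool" where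
  "two_regular G \<longleftrightarrow> (\<forall>v\<in>verts G. degree G v = 2)"

text \<open>Complete graph on a vertex set, path through a list of distinct vertices,
  disjoint union and join (used only for disjoint vertex sets).\<close>
definition complete_graph :: "'a set \<Rightarrow> 'a graph" where
  "complete_graph S = (S, {{u, v} | u v. u \<in> S \<and> v \<in> S \<and> u \<noteq> v})"

definition path_graph :: "'a list \<Rightarrow> 'a graph" where
  "path_graph xs = (set xs, {{xs ! i, xs ! Suc i} | i. Suc i < length xs})"

definition gunion :: "'a graph \<Rightarrow> 'a graph \<Rightarrow> 'a graph" where
  "gunion G H = (verts G \<union> verts H, edges G \<union> edges H)"

definition gjoin :: "'a graph \<Rightarrow> 'a graph \<Rightarrow> 'a graph" where
  "gjoin G H = (verts G \<union> verts H,
     edges G \<union> edges H \<union> {{u, v} | u v. u \<in> verts G \<and> v \<in> verts H})"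

definition in_H :: "nat \<Rightarrow> 'a graph \<Rightarrow> bool" where
  "in_H m H \<longleftrightarrow> wf_graph H \<and> card (verts H) = m \<and> two_regular H \<and>
     \<not> contains_subgraph (complete_bipartite 2 2) H"

text \<open>Written with m + k = n to
  avoid natural-number subtraction.\<close>
definition in_G :: "nat \<Rightarrow> 'a graph \<Rightarrow> bool" where
  "in_G n G \<longleftrightarrow>
    (\<exists>H m x y. in_H m H \<and> m + 2 = n \<and> x \<notin> verts H \<and> y \<notin> verts H \<and> x \<noteq> y \<and>
        G = gjoin (complete_graph {x}) (gunion (complete_graph {y}) H)) \<or>
    (\<exists>H m x y z. in_H m H \<and> m + 3 = n \<and> distinct [x, y, z] \<and>
        set [x, y, z] \<inter> verts H = {} \<and>
        G = gjoin (complete_graph {x}) (gunion (complete_graph {y, z}) H)) \<or>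
    (\<exists>H m x ps. in_H m H \<and> m + 5 = n \<and> length ps = 4 \<and> distinct (x # ps) \<and>
        set (x # ps) \<inter> verts H = {} \<and>
        G = gjoin (complete_graph {x}) (gunion (path_graph ps) H))"

end

theory Submission
  imports Defs
begin

(* Every graph of the family G_n is a cone  x * F  over a graph F = A + H,
   where A is K_1, K_2 or P_4 and H is a 2-regular C_4-free graph.  The whole argument
   lives on the level of the base F:

   - the cone x * F is K_{2,3}-free as soon as F has maximum degree at most 2 and no C_4
     (a K_{2,3} either uses x on its 2-side, giving a vertex of degree 3 in F, or its
     remaining vertices contain a C_4 of F);
   - adding a non-edge uv of x * F creates a K_{2,3} as soon as, in F, u or v has two
     neighbours or u and v are the ends of a path of length 3 ("saturating pairs");
   - these properties of the base pass to disjoint unions A + H when H has minimum degree 2,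
     and hold for K_1, K_2, P_4 and for every graph of the class H_m.

   Counting edges, x * F has |E(F)| + |V(F)| edges, and |E(H)| = |V(H)| for 2-regular H
   by double counting; this yields 2n - 3 in each of the three cases. *)

lemma wf_graph_edge:
  assumes "wf_graph F" "{a, b} \<in> edges F"
  shows "a \<in> verts F" "b \<in> verts F" "a \<noteq> b"
proof -
  obtain u v where "{a, b} = {u, v}" "u \<in> verts F" "v \<in> verts F" "u \<noteq> v"
    using assms unfolding wf_graph_def by blast
  then show "a \<in> verts F" "b \<in> verts F" "a \<noteq> b" by (auto simp: doubleton_eq_iff)
qed

lemma wf_graph_finite_edges:
  assumes "wf_graph F"
  shows "finite (edges F)"
proof (rule finite_subset)
  show "edges F \<subseteq> Pow (verts F)" using assms unfolding wf_graph_def by fastforce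
  show "finite (Pow (verts F))" using assms by (simp add: wf_graph_def)
qed

lemma graph_components: "verts (V, E) = V" "edges (V, E) = E"
  by (simp_all add: verts_def edges_def)

abbreviation cone :: "'a \<Rightarrow> 'a graph \<Rightarrow> 'a graph" where
  "cone x F \<equiv> gjoin (complete_graph {x}) F"

lemma cone_verts: "verts (cone x F) = insert x (verts F)"
  by (simp add: gjoin_def verts_def complete_graph_def)

lemma cone_edges: "edges (cone x F) = edges F \<union> (\<lambda>r. {x, r}) ` verts F"
  by (auto simp: gjoin_def verts_def edges_def complete_graph_def)

lemma gunion_verts: "verts (gunion A B) = verts A \<union> verts B"
  by (simp add: gunion_def verts_def)

lemma gunion_edges: "edges (gunion A B) = edges A \<union> edges B"
  by (simp add: gunion_def edges_def)

lemma add_edge_verts: "verts (add_edge G u v) = verts G"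
  by (simp add: add_edge_def verts_def)

lemma add_edge_edges: "edges (add_edge G u v) = insert {u, v} (edges G)"
  by (simp add: add_edge_def edges_def verts_def)

lemma add_edge_commute: "add_edge G u v = add_edge G v u"
  by (simp add: add_edge_def insert_commute)

lemma K2t_iff:
  "contains_subgraph (complete_bipartite 2 t) G \<longleftrightarrow>
   (\<exists>a b cs. length cs = t \<and> distinct (a # b # cs) \<and> set (a # b # cs) \<subseteq> verts G \<and>
      (\<forall>c\<in>set cs. {a, c} \<in> edges G \<and> {b, c} \<in> edges G))"
  (is "?lhs \<longleftrightarrow> ?rhs")
proof
  let ?E = "{{i, j} | i j. i < (2::nat) \<and> 2 \<le> j \<and> j < 2 + t}"
  assume ?lhs
  then obtain f where f: "inj_on f {0..<2 + t}" "f ` {0..<2 + t} \<subseteq> verts G"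
    "\<forall>e\<in>?E. f ` e \<in> edges G"
    unfolding contains_subgraph_def complete_bipartite_def verts_def edges_def by auto
  have edge: "{f i, f j} \<in> edges G" if "i < 2" "2 \<le> j" "j < 2 + t" for i j
  proof -
    have "{i, j} \<in> ?E" using that by blast
    with f(3) have "f ` {i, j} \<in> edges G" by blast
    then show ?thesis by simp
  qed
  let ?cs = "map f [2..<2 + t]"
  have all: "f 0 # f 1 # ?cs = map f [0..<2 + t]" by (simp add: upt_conv_Cons numeral_2_eq_2 del: upt_Suc)
  show ?rhs
  proof (intro exI conjI)
    show "length ?cs = t" by (simp del: upt_Suc)
    show "distinct (f 0 # f 1 # ?cs)" unfolding all distinct_map set_upt using f(1) distinct_upt by blast
    show "set (f 0 # f 1 # ?cs) \<subseteq> verts G" unfolding all set_map set_upt using f(2) by blast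
    show "\<forall>c\<in>set ?cs. {f 0, c} \<in> edges G \<and> {f 1, c} \<in> edges G" using edge by auto
  qed
next
  assume ?rhs
  then obtain a b cs where h: "length cs = t" "distinct (a # b # cs)"
    "set (a # b # cs) \<subseteq> verts G" "\<forall>c\<in>set cs. {a, c} \<in> edges G \<and> {b, c} \<in> edges G"
    by blast
  let ?f = "\<lambda>i. (a # b # cs) ! i"
  have "inj_on ?f {0..<2 + t}" using h(1,2) by (simp add: inj_on_def nth_eq_iff_index_eq)
  moreover have "?f ` {0..<2 + t} \<subseteq> verts G" 
  proof
    fix v assume "v \<in> ?f ` {0..<2 + t}"
    then obtain i where "i < length (a # b # cs)" "v = ?f i" using h(1) by auto
    then show "v \<in> verts G" using nth_mem h(3) by blast
  qed
  moreover have "?f ` {i, j} \<in> edges G" if "i < 2" "2 \<le> j" "j < 2 + t" for i j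
  proof -
    have "j = Suc (Suc (j - 2))" "j - 2 < length cs" using that h(1) by arith+
    then have "?f j \<in> set cs" by (metis nth_Cons_Suc nth_mem)
    moreover have "?f i = a \<or> ?f i = b" using \<open>i < 2\<close> by (auto simp: nth_Cons')
    ultimately show ?thesis using h(4) by auto
  qed
  ultimately show ?lhs
    unfolding contains_subgraph_def complete_bipartite_def verts_def edges_def
    by (intro exI[of _ ?f]) auto
qed
lemma ex_list_length_3: "(\<exists>cs. length cs = 3 \<and> P cs) \<longleftrightarrow> (\<exists>c d e. P [c, d, e])"
proof
  assume "\<exists>cs. length cs = 3 \<and> P cs"
  then show "\<exists>c d e. P [c, d, e]" by (auto simp: length_Suc_conv numeral_eq_Suc)
next
  assume "\<exists>c d e. P [c, d, e]"
  then obtain c d e where "P [c, d, e]" by blast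
  then have "length [c, d, e] = 3 \<and> P [c, d, e]" by simp
  then show "\<exists>cs. length cs = 3 \<and> P cs" by blast
qed

lemma ex_list_length_2: "(\<exists>cs. length cs = 2 \<and> P cs) \<longleftrightarrow> (\<exists>c d. P [c, d])"
proof
  assume "\<exists>cs. length cs = 2 \<and> P cs"
  then show "\<exists>c d. P [c, d]" by (auto simp: length_Suc_conv numeral_eq_Suc)
next
  assume "\<exists>c d. P [c, d]"
  then obtain c d where "P [c, d]" by blast
  then have "length [c, d] = 2 \<and> P [c, d]" by simp
  then show "\<exists>cs. length cs = 2 \<and> P cs" by blast
qed

lemma K23_iff:
  "contains_subgraph (complete_bipartite 2 3) G \<longleftrightarrow>
   (\<exists>a b c d e. distinct [a, b, c, d, e] \<and> {a, b, c, d, e} \<subseteq> verts G \<and>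
     {a, c} \<in> edges G \<and> {a, d} \<in> edges G \<and> {a, e} \<in> edges G \<and>
     {b, c} \<in> edges G \<and> {b, d} \<in> edges G \<and> {b, e} \<in> edges G)"
  unfolding K2t_iff ex_list_length_3 by (auto; blast)

lemma K22_iff:
  "contains_subgraph (complete_bipartite 2 2) G \<longleftrightarrow>
   (\<exists>a b c d. distinct [a, b, c, d] \<and> {a, b, c, d} \<subseteq> verts G \<and>
     {a, c} \<in> edges G \<and> {a, d} \<in> edges G \<and> {b, c} \<in> edges G \<and> {b, d} \<in> edges G)"
  unfolding K2t_iff ex_list_length_2 by (auto; blast)

section \<open>Properties of a base graph that make its cone K_{2,3}-saturated\<close>

definition max_degree_2 :: "'a graph \<Rightarrow> bool" where
  "max_degree_2 F \<longleftrightarrow> (\<forall>v a b c. {v, a} \<in> edges F \<and> {v, b} \<in> edges F \<and> {v, c} \<in> edges F \<longrightarrow>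
     a = b \<or> a = c \<or> b = c)"

definition has_two_neighbours :: "'a graph \<Rightarrow> 'a \<Rightarrow> bool" where
  "has_two_neighbours F v \<longleftrightarrow> (\<exists>n1 n2. n1 \<noteq> n2 \<and> {v, n1} \<in> edges F \<and> {v, n2} \<in> edges F)"

definition C4_free :: "'a graph \<Rightarrow> bool" where
  "C4_free F \<longleftrightarrow> \<not> contains_subgraph (complete_bipartite 2 2) F"

text \<open>A non-adjacent pair u, v of the base whose joining creates a K_{2,3} in the cone:
  one of them has two neighbours, or they are the ends of a path u c d v.\<close>
definition saturating_pair :: "'a graph \<Rightarrow> 'a \<Rightarrow> 'a \<Rightarrow> bool" where
  "saturating_pair F u v \<longleftrightarrow> has_two_neighbours F u \<or> has_two_neighbours F v \<or>
     (\<exists>c d. distinct [u, v, c, d] \<and> {u, c} \<in> edges F \<and> {c, d} \<in> edges F \<and> {d, v} \<in> edges F)"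

text \<open>A base graph: its cone turns out to be K_{2,3}-saturated (lemma cone_K23_saturated).\<close>
definition cone_base :: "'a graph \<Rightarrow> bool" where
  "cone_base F \<longleftrightarrow> wf_graph F \<and> max_degree_2 F \<and> C4_free F \<and>
     (\<forall>u\<in>verts F. \<forall>v\<in>verts F. u \<noteq> v \<and> {u, v} \<notin> edges F \<longrightarrow> saturating_pair F u v)"

lemma max_degree_2_no_claw:
  assumes "max_degree_2 F" "distinct [p, q, r]"
    "{v, p} \<in> edges F" "{v, q} \<in> edges F" "{v, r} \<in> edges F"
  shows False
  using assms unfolding max_degree_2_def by auto

lemma C4_free_no_C4:
  assumes "C4_free F" "wf_graph F" "distinct [a, b, c, d]"
    "{a, c} \<in> edges F" "{a, d} \<in> edges F" "{b, c} \<in> edges F" "{b, d} \<in> edges F"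
  shows False
proof -
  have "{a, b, c, d} \<subseteq> verts F" using wf_graph_edge[OF assms(2)] assms(4-7) by auto
  then have "contains_subgraph (complete_bipartite 2 2) F"
    unfolding K22_iff using assms(3-7) by blast
  with assms(1) show False by (simp add: C4_free_def)
qed

lemma cone_wf:
  assumes "wf_graph F" "x \<notin> verts F"
  shows "wf_graph (cone x F)"
  using assms unfolding wf_graph_def cone_verts cone_edges by blast

lemma cone_edge_in_base:
  assumes "{a, b} \<in> edges (cone x F)" "a \<noteq> x" "b \<noteq> x"
  shows "{a, b} \<in> edges F"
  using assms by (auto simp: cone_edges doubleton_eq_iff)

text \<open>A K_{2,3} in the cone either uses the apex on its 2-side, so that the other vertex
  of that side has three neighbours in F, or four of its vertices form a C_4 in F.\<close>
lemma cone_K23_free: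
  assumes wf: "wf_graph F" and x: "x \<notin> verts F"
    and deg: "max_degree_2 F" and C4: "C4_free F"
  shows "\<not> contains_subgraph (complete_bipartite 2 3) (cone x F)"
proof
  assume "contains_subgraph (complete_bipartite 2 3) (cone x F)"
  then obtain a b c d e where h: "distinct [a, b, c, d, e]"
    "{a, c} \<in> edges (cone x F)" "{a, d} \<in> edges (cone x F)" "{a, e} \<in> edges (cone x F)"
    "{b, c} \<in> edges (cone x F)" "{b, d} \<in> edges (cone x F)" "{b, e} \<in> edges (cone x F)"
    unfolding K23_iff by blast
  note base = cone_edge_in_base[of _ _ x F]
  consider "a = x" | "b = x" | "a \<noteq> x" "b \<noteq> x" by blast
  then show False
  proof cases
    case 1
    with h(1) have "b \<noteq> x" "c \<noteq> x" "d \<noteq> x" "e \<noteq> x" by auto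
    with h show False
      using max_degree_2_no_claw[OF deg, of c d e b] base[OF h(5)] base[OF h(6)] base[OF h(7)]
      by simp
  next
    case 2
    with h(1) have "a \<noteq> x" "c \<noteq> x" "d \<noteq> x" "e \<noteq> x" by auto
    with h show False
      using max_degree_2_no_claw[OF deg, of c d e a] base[OF h(2)] base[OF h(3)] base[OF h(4)]
      by simp
  next
    case 3
    text \<open>At most one of c, d, e is the apex; two others p, q close a 4-cycle with a, b.\<close>
    obtain p q where pq: "distinct [a, b, p, q]" "p \<noteq> x" "q \<noteq> x"
      "{a, p} \<in> edges (cone x F)" "{a, q} \<in> edges (cone x F)"
      "{b, p} \<in> edges (cone x F)" "{b, q} \<in> edges (cone x F)"
    proof (cases "c = x")
      case True
      then show thesis using that[of d e] h by auto
    next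
      case False
      show thesis
      proof (cases "d = x")
        case True
        then show thesis using that[of c e] h \<open>c \<noteq> x\<close> by auto
      qed (use that[of c d] h \<open>c \<noteq> x\<close> in auto)
    qed
    then show False
      using C4_free_no_C4[OF C4 wf pq(1)] base[OF pq(4)] base[OF pq(5)] base[OF pq(6)] base[OF pq(7)] 3
      by simp
  qed
qed

text \<open>If u has two neighbours n1, n2 in F then, after adding uv, the apex and u are both
  joined to v, n1, n2.\<close>
lemma cone_add_edge_two_neighbours:
  assumes wf: "wf_graph F" and x: "x \<notin> verts F" and uv: "u \<noteq> v" "v \<in> verts F"
    and nonadj: "{u, v} \<notin> edges F" and two: "has_two_neighbours F u"
  shows "contains_subgraph (complete_bipartite 2 3) (add_edge (cone x F) u v)"
proof -
  obtain n1 n2 where n: "n1 \<noteq> n2" "{u, n1} \<in> edges F" "{u, n2} \<in> edges F"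
    using two unfolding has_two_neighbours_def by blast
  have "u \<in> verts F" "n1 \<in> verts F" "n2 \<in> verts F" "n1 \<noteq> u" "n2 \<noteq> u"
    using wf_graph_edge[OF wf n(2)] wf_graph_edge[OF wf n(3)] by auto
  moreover have "n1 \<noteq> v" "n2 \<noteq> v" using n nonadj by auto
  ultimately show ?thesis
    unfolding K23_iff add_edge_verts add_edge_edges cone_verts cone_edges
    using n uv x by (intro exI[of _ x] exI[of _ u] exI[of _ v] exI[of _ n1] exI[of _ n2]) auto
qed

text \<open>If u c d v is a path in F then, after adding uv, u and d are both joined to
  the apex, c and v.\<close>
lemma cone_add_edge_path:
  assumes wf: "wf_graph F" and x: "x \<notin> verts F" and v: "v \<in> verts F"
    and path: "distinct [u, v, c, d]" "{u, c} \<in> edges F" "{c, d} \<in> edges F" "{d, v} \<in> edges F"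
  shows "contains_subgraph (complete_bipartite 2 3) (add_edge (cone x F) u v)"
proof -
  have "u \<in> verts F" "c \<in> verts F" "d \<in> verts F"
    using wf_graph_edge[OF wf path(2)] wf_graph_edge[OF wf path(3)] by auto
  then show ?thesis
    unfolding K23_iff add_edge_verts add_edge_edges cone_verts cone_edges
    using path v x
    by (intro exI[of _ u] exI[of _ d] exI[of _ x] exI[of _ c] exI[of _ v]) (auto simp: insert_commute)
qed

lemma cone_K23_saturated:
  assumes base: "cone_base F" and x: "x \<notin> verts F"
  shows "K23_saturated (cone x F)"
  unfolding K23_saturated_def
proof (intro conjI ballI impI)
  have wf: "wf_graph F" using base by (simp add: cone_base_def)
  show "wf_graph (cone x F)" using cone_wf[OF wf x] .
  show "\<not> contains_subgraph (complete_bipartite 2 3) (cone x F)"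
    using cone_K23_free[OF wf x] base by (simp add: cone_base_def)
  fix u v assume u: "u \<in> verts (cone x F)" and v: "v \<in> verts (cone x F)"
    and nonadj: "u \<noteq> v \<and> {u, v} \<notin> edges (cone x F)"
  text \<open>The apex is adjacent to everything, so u and v lie in F and are non-adjacent there.\<close>
  have "u \<in> verts F" "v \<in> verts F" "{u, v} \<notin> edges F"
    using u v nonadj by (auto simp: cone_verts cone_edges insert_commute)
  then have "saturating_pair F u v" using base nonadj by (auto simp: cone_base_def)
  then show "contains_subgraph (complete_bipartite 2 3) (add_edge (cone x F) u v)"
    unfolding saturating_pair_def
  proof (elim disjE exE conjE)
    assume "has_two_neighbours F u"
    then show ?thesis
      using cone_add_edge_two_neighbours[OF wf x] nonadj \<open>v \<in> verts F\<close> \<open>{u, v} \<notin> edges F\<close> by blast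
  next
    assume "has_two_neighbours F v"
    then have "contains_subgraph (complete_bipartite 2 3) (add_edge (cone x F) v u)"
      using cone_add_edge_two_neighbours[OF wf x] nonadj \<open>u \<in> verts F\<close> \<open>{u, v} \<notin> edges F\<close>
      by (metis insert_commute)
    then show ?thesis by (simp add: add_edge_commute)
  next
    fix c d
    assume "distinct [u, v, c, d]" "{u, c} \<in> edges F" "{c, d} \<in> edges F" "{d, v} \<in> edges F"
    then show ?thesis using cone_add_edge_path[OF wf x \<open>v \<in> verts F\<close>] by blast
  qed
qed

lemma cone_edge_count:
  assumes wf: "wf_graph F" and x: "x \<notin> verts F"
  shows "card (edges (cone x F)) = card (edges F) + card (verts F)"
proof -
  have "inj_on (\<lambda>r. {x, r}) (verts F)" by (auto simp: inj_on_def doubleton_eq_iff)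
  moreover have "edges F \<inter> (\<lambda>r. {x, r}) ` verts F = {}"
    using wf_graph_edge(1)[OF wf] x by blast
  moreover have "finite (verts F)" using wf by (simp add: wf_graph_def)
  ultimately show ?thesis
    unfolding cone_edges using wf_graph_finite_edges[OF wf]
    by (simp add: card_Un_disjoint card_image)
qed

section \<open>Disjoint unions of base graphs\<close>

lemma gunion_edge_side:
  assumes "wf_graph A" "wf_graph B" "verts A \<inter> verts B = {}"
    "{p, q} \<in> edges A \<union> edges B" "p \<in> verts A"
  shows "{p, q} \<in> edges A"
  using assms wf_graph_edge(1)[of B p q] by blast

lemma gunion_C4_side:
  assumes wf: "wf_graph A" "wf_graph B" "verts A \<inter> verts B = {}"
    and E: "{a, c} \<in> edges A \<union> edges B" "{a, d} \<in> edges A \<union> edges B"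
      "{b, c} \<in> edges A \<union> edges B" "{b, d} \<in> edges A \<union> edges B"
    and a: "a \<in> verts A"
  shows "{a, c} \<in> edges A" "{a, d} \<in> edges A" "{b, c} \<in> edges A" "{b, d} \<in> edges A"
proof -
  note side = gunion_edge_side[OF wf]
  show ac: "{a, c} \<in> edges A" and "{a, d} \<in> edges A" using side E a by blast+
  have "c \<in> verts A" using wf_graph_edge(2)[OF wf(1) ac] .
  then show bc: "{b, c} \<in> edges A" using side[of c b] E(3) by (simp add: insert_commute)
  have "b \<in> verts A" using wf_graph_edge(1)[OF wf(1) bc] .
  then show "{b, d} \<in> edges A" using side E(4) by blast
qed

lemma gunion_wf:
  assumes "wf_graph A" "wf_graph B"
  shows "wf_graph (gunion A B)"
  using assms unfolding wf_graph_def gunion_verts gunion_edges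
  by (metis UnE UnI1 UnI2 finite_UnI)

lemma gunion_max_degree_2:
  assumes wf: "wf_graph A" "wf_graph B" "verts A \<inter> verts B = {}"
    and deg: "max_degree_2 A" "max_degree_2 B"
  shows "max_degree_2 (gunion A B)"
  unfolding max_degree_2_def gunion_edges
proof (intro allI impI)
  fix v a b c
  assume E: "{v, a} \<in> edges A \<union> edges B \<and> {v, b} \<in> edges A \<union> edges B \<and> {v, c} \<in> edges A \<union> edges B"
  have wf': "wf_graph B" "wf_graph A" "verts B \<inter> verts A = {}" using wf by auto
  have "v \<in> verts A \<or> v \<in> verts B" using E wf_graph_edge(1)[OF wf(1)] wf_graph_edge(1)[OF wf(2)] by blast
  then show "a = b \<or> a = c \<or> b = c"
  proof
    assume "v \<in> verts A"
    then show ?thesis using gunion_edge_side[OF wf] E deg(1) unfolding max_degree_2_def by blast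
  next
    assume "v \<in> verts B"
    then show ?thesis using gunion_edge_side[OF wf'] E deg(2) unfolding max_degree_2_def by blast
  qed
qed

lemma gunion_C4_free:
  assumes wf: "wf_graph A" "wf_graph B" "verts A \<inter> verts B = {}"
    and C4: "C4_free A" "C4_free B"
  shows "C4_free (gunion A B)"
proof -
  have wf': "wf_graph B" "wf_graph A" "verts B \<inter> verts A = {}" using wf by auto
  {
    assume "contains_subgraph (complete_bipartite 2 2) (gunion A B)"
    then obtain a b c d where h: "distinct [a, b, c, d]" "a \<in> verts A \<union> verts B"
      "{a, c} \<in> edges A \<union> edges B" "{a, d} \<in> edges A \<union> edges B"
      "{b, c} \<in> edges A \<union> edges B" "{b, d} \<in> edges A \<union> edges B"
      unfolding K22_iff gunion_verts gunion_edges by auto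
    from h(2) have False
    proof
      assume "a \<in> verts A"
      from gunion_C4_side[OF wf h(3-6) this] show False
        by (rule C4_free_no_C4[OF C4(1) wf(1) h(1)])
    next
      assume aB: "a \<in> verts B"
      have E: "{a, c} \<in> edges B \<union> edges A" "{a, d} \<in> edges B \<union> edges A"
        "{b, c} \<in> edges B \<union> edges A" "{b, d} \<in> edges B \<union> edges A" using h(3-6) by auto
      from gunion_C4_side[OF wf' E aB] show False
        by (rule C4_free_no_C4[OF C4(2) wf(2) h(1)])
    qed
  }
  then show ?thesis unfolding C4_free_def by blast
qed

text \<open>Non-adjacent pairs of A + B are saturating when A is a base graph and every vertex
  of B has two neighbours: pairs meeting B qualify through that vertex.\<close>
lemma gunion_cone_base:
  assumes A: "cone_base A" and wfB: "wf_graph B" and dj: "verts A \<inter> verts B = {}"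
    and degB: "max_degree_2 B" and C4B: "C4_free B"
    and twoB: "\<forall>v\<in>verts B. has_two_neighbours B v"
  shows "cone_base (gunion A B)"
proof -
  have wfA: "wf_graph A" using A by (simp add: cone_base_def)
  have two: "has_two_neighbours (gunion A B) v" if "v \<in> verts B" for v
    using twoB that unfolding has_two_neighbours_def gunion_edges by blast
  have "saturating_pair (gunion A B) u v"
    if "u \<in> verts (gunion A B)" "v \<in> verts (gunion A B)" "u \<noteq> v" "{u, v} \<notin> edges (gunion A B)"
    for u v
  proof (cases "u \<in> verts B \<or> v \<in> verts B")
    case True
    then show ?thesis using two unfolding saturating_pair_def by blast
  next
    case False
    then have "u \<in> verts A" "v \<in> verts A" "{u, v} \<notin> edges A"
      using that unfolding gunion_verts gunion_edges by auto
    then have "saturating_pair A u v" using A that(3) by (auto simp: cone_base_def)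
    then show ?thesis
      unfolding saturating_pair_def has_two_neighbours_def gunion_edges by blast
  qed
  then show ?thesis
    using A unfolding cone_base_def
    using gunion_wf[OF wfA wfB] gunion_max_degree_2[OF wfA wfB dj _ degB]
      gunion_C4_free[OF wfA wfB dj _ C4B] by blast
qed

lemma gunion_counts:
  assumes wf: "wf_graph A" "wf_graph B" and dj: "verts A \<inter> verts B = {}"
  shows "card (verts (gunion A B)) = card (verts A) + card (verts B)"
    "card (edges (gunion A B)) = card (edges A) + card (edges B)"
proof -
  show "card (verts (gunion A B)) = card (verts A) + card (verts B)"
    unfolding gunion_verts using wf dj by (simp add: card_Un_disjoint wf_graph_def)
  have "e \<notin> edges B" if "e \<in> edges A" for e
  proof -
    obtain p q where "e = {p, q}" "p \<in> verts A" using \<open>e \<in> edges A\<close> wf(1)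
      unfolding wf_graph_def by blast
    then show ?thesis using dj wf_graph_edge(1)[OF wf(2), of p q] by blast
  qed
  then have "edges A \<inter> edges B = {}" by blast
  then show "card (edges (gunion A B)) = card (edges A) + card (edges B)"
    unfolding gunion_edges using wf_graph_finite_edges[OF wf(1)] wf_graph_finite_edges[OF wf(2)]
    by (simp add: card_Un_disjoint)
qed

section \<open>The class H_m\<close>

lemma two_regular_neighbourhood:
  assumes "two_regular H" "v \<in> verts H"
  shows "\<exists>s t. s \<noteq> t \<and> {u. {u, v} \<in> edges H} = {s, t}"
  using assms unfolding two_regular_def degree_def by (simp add: card_2_iff) blast

lemma two_regular_max_degree_2:
  assumes wf: "wf_graph H" and reg: "two_regular H"
  shows "max_degree_2 H"
  unfolding max_degree_2_def
proof (intro allI impI)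
  fix v a b c assume E: "{v, a} \<in> edges H \<and> {v, b} \<in> edges H \<and> {v, c} \<in> edges H"
  then have "v \<in> verts H" using wf_graph_edge(1)[OF wf] by blast
  then obtain s t where st: "{u. {u, v} \<in> edges H} = {s, t}"
    using two_regular_neighbourhood[OF reg] by blast
  have "a \<in> {s, t}" "b \<in> {s, t}" "c \<in> {s, t}"
    using E unfolding st[symmetric] by (auto simp: insert_commute)
  then show "a = b \<or> a = c \<or> b = c" by auto
qed

lemma two_regular_has_two_neighbours:
  assumes reg: "two_regular H" and v: "v \<in> verts H"
  shows "has_two_neighbours H v"
proof -
  obtain s t where st: "s \<noteq> t" "{u. {u, v} \<in> edges H} = {s, t}"
    using two_regular_neighbourhood[OF reg v] by blast
  then have "{v, s} \<in> edges H" "{v, t} \<in> edges H" by (auto simp: insert_commute)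
  with st(1) show ?thesis unfolding has_two_neighbours_def by blast
qed

lemma degree_eq_incident_edges:
  assumes wf: "wf_graph H"
  shows "degree H v = card {e \<in> edges H. v \<in> e}"
proof -
  let ?N = "{u. {u, v} \<in> edges H}"
  have inj: "inj_on (\<lambda>u. {u, v}) ?N" by (auto simp: inj_on_def doubleton_eq_iff)
  have img: "(\<lambda>u. {u, v}) ` ?N = {e \<in> edges H. v \<in> e}"
  proof (intro equalityI subsetI)
    fix e assume "e \<in> (\<lambda>u. {u, v}) ` ?N"
    then show "e \<in> {e \<in> edges H. v \<in> e}" by blast
  next
    fix e assume e: "e \<in> {e \<in> edges H. v \<in> e}"
    then obtain a b where ab: "e = {a, b}" using wf unfolding wf_graph_def by blast
    have "e = {b, v} \<or> e = {a, v}" using e ab by blast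
    then show "e \<in> (\<lambda>u. {u, v}) ` ?N" using e by blast
  qed
  have "card ?N = card ((\<lambda>u. {u, v}) ` ?N)" by (rule card_image[OF inj, symmetric])
  also have "\<dots> = card {e \<in> edges H. v \<in> e}" unfolding img ..
  finally show ?thesis unfolding degree_def .
qed

text \<open>Handshake lemma for 2-regular graphs: double counting vertex-edge incidences gives
  2 |V| = 2 |E|.\<close>
lemma two_regular_edge_count:
  assumes wf: "wf_graph H" and reg: "two_regular H"
  shows "card (edges H) = card (verts H)"
proof -
  have fV: "finite (verts H)" using wf by (simp add: wf_graph_def)
  have fE: "finite (edges H)" using wf_graph_finite_edges[OF wf] .
  let ?inc = "\<lambda>v e. if v \<in> e then 1 else (0::nat)"
  have deg: "card {e \<in> edges H. v \<in> e} = 2" if "v \<in> verts H" for v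
    using reg that degree_eq_incident_edges[OF wf, of v] unfolding two_regular_def by simp
  have "2 * card (verts H) = (\<Sum>v\<in>verts H. card {e \<in> edges H. v \<in> e})"
    using deg by simp
  also have "\<dots> = (\<Sum>v\<in>verts H. \<Sum>e\<in>edges H. ?inc v e)"
    by (intro sum.cong refl) (simp add: sum.If_cases fE Int_def)
  also have "\<dots> = (\<Sum>e\<in>edges H. \<Sum>v\<in>verts H. ?inc v e)" by (rule sum.swap)
  also have "\<dots> = (\<Sum>e\<in>edges H. 2)"
  proof (intro sum.cong refl)
    fix e assume "e \<in> edges H"
    then obtain a b where ab: "e = {a, b}" "a \<in> verts H" "b \<in> verts H" "a \<noteq> b"
      using wf unfolding wf_graph_def by blast
    then have "verts H \<inter> e = {a, b}" by auto
    with ab(4) show "(\<Sum>v\<in>verts H. ?inc v e) = 2" by (simp add: sum.If_cases fV)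
  qed
  also have "\<dots> = 2 * card (edges H)" by simp
  finally show ?thesis by simp
qed

lemma in_H_properties:
  assumes "in_H m H"
  shows "wf_graph H" "max_degree_2 H" "C4_free H" "\<forall>v\<in>verts H. has_two_neighbours H v"
    "card (verts H) = m" "card (edges H) = m"
proof -
  have wf: "wf_graph H" and reg: "two_regular H" and V: "card (verts H) = m"
    and "C4_free H"
    using assms unfolding in_H_def C4_free_def by auto
  then show "wf_graph H" "max_degree_2 H" "C4_free H" "\<forall>v\<in>verts H. has_two_neighbours H v"
    "card (verts H) = m" "card (edges H) = m"
    using two_regular_max_degree_2[OF wf reg] two_regular_has_two_neighbours[OF reg]
      two_regular_edge_count[OF wf reg] by auto
qed

section \<open>The three small pieces K_1, K_2 and P_4\<close>

lemma complete_graph_singleton: "complete_graph {y} = ({y}, {})"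
  by (simp add: complete_graph_def)

lemma complete_graph_pair:
  assumes "y \<noteq> z"
  shows "complete_graph {y, z} = ({y, z}, {{y, z}})"
  using assms by (auto simp: complete_graph_def insert_commute)

lemma path_graph_4: "path_graph [a, b, c, d] = ({a, b, c, d}, {{a, b}, {b, c}, {c, d}})"
proof -
  have "{i. Suc i < length [a, b, c, d]} = {0, 1, 2}" by auto
  then have "{{[a, b, c, d] ! i, [a, b, c, d] ! Suc i} | i. Suc i < length [a, b, c, d]} =
      (\<lambda>i. {[a, b, c, d] ! i, [a, b, c, d] ! Suc i}) ` {0, 1, 2}"
    by blast
  then show ?thesis unfolding path_graph_def by simp
qed

lemma K1_cone_base: "cone_base (complete_graph {y})"
  unfolding complete_graph_singleton cone_base_def wf_graph_def max_degree_2_def C4_free_def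
    K22_iff graph_components
  by simp

lemma K2_cone_base:
  assumes "y \<noteq> z"
  shows "cone_base (complete_graph {y, z})"
  unfolding complete_graph_pair[OF assms] cone_base_def wf_graph_def max_degree_2_def C4_free_def
    K22_iff graph_components
  using assms by (auto simp: doubleton_eq_iff)

text \<open>In P_4 = a b c d the inner vertices have two neighbours and the ends are joined
  by the path itself.\<close>
lemma P4_cone_base:
  assumes ds: "distinct [a, b, c, d]"
  shows "cone_base (path_graph [a, b, c, d])"
proof -
  let ?P = "path_graph [a, b, c, d]"
  have V: "verts ?P = {a, b, c, d}" and E: "edges ?P = {{a, b}, {b, c}, {c, d}}"
    by (simp_all add: path_graph_4 graph_components)
  have adj: "{v, w} \<in> edges ?P \<longleftrightarrow> {v, w} = {a, b} \<or> {v, w} = {b, c} \<or> {v, w} = {c, d}" for v w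
    unfolding E by simp
  have wf: "wf_graph ?P" unfolding wf_graph_def V E using ds by auto
  have deg: "max_degree_2 ?P" unfolding max_degree_2_def adj using ds by (auto simp: doubleton_eq_iff)
  text \<open>Only b and c have two neighbours, and a 4-cycle needs four such vertices.\<close>
  have inner: "w = b \<or> w = c" if "{w, n1} \<in> edges ?P" "{w, n2} \<in> edges ?P" "n1 \<noteq> n2" for w n1 n2
    using that ds unfolding adj by (auto simp: doubleton_eq_iff)
  have C4: "C4_free ?P"
  proof -
    {
      fix p q r s
      assume h: "distinct [p, q, r, s]" "{p, r} \<in> edges ?P" "{p, s} \<in> edges ?P"
        "{q, r} \<in> edges ?P" "{q, s} \<in> edges ?P"
      have "p = b \<or> p = c" "q = b \<or> q = c" using inner h by auto
      moreover have "r = b \<or> r = c" using inner[of r p q] h by (simp add: insert_commute)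
      ultimately have False using h(1) by auto
    }
    then show ?thesis unfolding C4_free_def K22_iff by blast
  qed
  have b: "has_two_neighbours ?P b"
    unfolding has_two_neighbours_def E using ds by (intro exI[of _ a] exI[of _ c]) auto
  have c: "has_two_neighbours ?P c"
    unfolding has_two_neighbours_def E using ds by (intro exI[of _ b] exI[of _ d]) auto
  have ad: "saturating_pair ?P a d"
    unfolding saturating_pair_def E using ds by (intro disjI2 exI[of _ b] exI[of _ c]) auto
  have da: "saturating_pair ?P d a"
    unfolding saturating_pair_def E using ds
    by (intro disjI2 exI[of _ c] exI[of _ b]) (auto simp: insert_commute)
  have "saturating_pair ?P u v" if "u \<in> verts ?P" "v \<in> verts ?P" "u \<noteq> v" "{u, v} \<notin> edges ?P" for u v
  proof (cases "u \<in> {b, c} \<or> v \<in> {b, c}")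
    case True
    then show ?thesis using b c unfolding saturating_pair_def by auto
  next
    case False
    then have "(u = a \<and> v = d) \<or> (u = d \<and> v = a)" using that unfolding V by auto
    then show ?thesis using ad da by auto
  qed
  then show ?thesis using wf deg C4 unfolding cone_base_def by blast
qed

lemma cone_over_piece:
  assumes A: "cone_base A" and H: "in_H m H" and dj: "verts A \<inter> verts H = {}"
    and x: "x \<notin> verts A" "x \<notin> verts H"
  shows "K23_saturated (cone x (gunion A H)) \<and>
    card (edges (cone x (gunion A H))) = card (edges A) + card (verts A) + 2 * m"
proof -
  note Hp = in_H_properties[OF H]
  have wfA: "wf_graph A" using A by (simp add: cone_base_def)
  have base: "cone_base (gunion A H)" by (rule gunion_cone_base[OF A Hp(1) dj Hp(2-4)])
  have xF: "x \<notin> verts (gunion A H)" using x by (simp add: gunion_verts)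
  have "card (edges (cone x (gunion A H))) = card (edges (gunion A H)) + card (verts (gunion A H))"
    by (rule cone_edge_count[OF gunion_wf[OF wfA Hp(1)] xF])
  also have "\<dots> = card (edges A) + card (verts A) + 2 * m"
    using gunion_counts[OF wfA Hp(1) dj] Hp(5,6) by simp
  finally show ?thesis using cone_K23_saturated[OF base xF] by blast
qed

theorem mainTheorem2:
  fixes G :: "'a graph" and n :: nat
  assumes "in_G n G"
  shows "K23_saturated G \<and> card (edges G) = 2 * n - 3"
  using assms unfolding in_G_def
proof (elim disjE exE conjE)
  fix H m x y
  assume "in_H m H" "m + 2 = n" "x \<notin> verts H" "y \<notin> verts H" "x \<noteq> y"
    "G = cone x (gunion (complete_graph {y}) H)"
  then show ?thesis using cone_over_piece[OF K1_cone_base, of m H y x]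
    by (simp add: complete_graph_singleton graph_components)
next
  fix H m x y z
  assume "in_H m H" "m + 3 = n" "distinct [x, y, z]" "set [x, y, z] \<inter> verts H = {}"
    "G = cone x (gunion (complete_graph {y, z}) H)"
  then show ?thesis using cone_over_piece[OF K2_cone_base, of y z m H x]
    by (simp add: complete_graph_pair graph_components)
next
  fix H m x ps
  assume "in_H m H" "m + 5 = n" "length ps = 4" "distinct (x # ps)" "set (x # ps) \<inter> verts H = {}"
    "G = cone x (gunion (path_graph ps) H)"
  moreover obtain a b c d where "ps = [a, b, c, d]"
    using \<open>length ps = 4\<close> by (auto simp: length_Suc_conv numeral_eq_Suc)
  ultimately show ?thesis using cone_over_piece[OF P4_cone_base, of a b c d m H x]
    by (simp add: path_graph_4 graph_components doubleton_eq_iff)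
qed

end
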